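(* Let $\Omega\subseteq\mathbb{R}^N$ be an open set with $\mathcal{L}^N(\Omega)<+\infty$, and let $p:\Omega\to[1,+\infty)$ be a measurable function with $p^+<+\infty$. Assume there exists $\beta>1$ such that $p^+\le \beta p^-$. Then for every $1\le q\le p^-$ and every $u\in L^{p(\cdot)}(\Omega)$, $$\|u\|_{q}\le \max\Big\{\big(\mathcal{L}^N(\Omega)\big)^{\frac1q-\frac1{p^-}},\ \big(\mathcal{L}^N(\Omega)\big)^{\beta\left(\frac1q-\frac1{p^+}\right)}\Big\}\Big[1+\frac{q}{p^+}(\beta-1)\Big]^{1/q}\|u\|_{p(\cdot)}.$$ In particular, if $u\in L^{p(\cdot)}(\Omega,\mathbb{R}^d)$, then $u\in L^q(\Omega,\mathbb{R}^d)$ for every $1\le q\le p^-$.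
   Context: For a measurable $p:\Omega\to[1,+\infty)$, $p^-:=\operatorname{ess\,inf}_{\Omega}p$ and $p^+:=\operatorname{ess\,sup}_{\Omega}p$. When $p^+<\infty$, $L^{p(\cdot)}(\Omega)$ is the space of measurable $u:\Omega\to\mathbb{R}$ with $\int_\Omega|u(x)|^{p(x)}dx<\infty$, endowed with the Luxemburg norm $\|u\|_{p(\cdot)}:=\inf\{\lambda>0:\int_\Omega|u(x)/\lambda|^{p(x)}dx\le1\}$; $L^{p(\cdot)}(\Omega,\mathbb{R}^d)$ is the set of $u:\Omega\to\mathbb{R}^d$ with $|u|\in L^{p(\cdot)}(\Omega)$, and $\|u\|_{p(\cdot)}:=\||u|\|_{p(\cdot)}$. $\|\cdot\|_q$ is the usual $L^q$ norm. *)

theory Defs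
  imports "HOL-Analysis.Analysis" "HOL-Probability.Essential_Supremum"
begin

definition essinf :: "'a measure \<Rightarrow> ('a \<Rightarrow> ereal) \<Rightarrow> ereal" where
  "essinf M f = - esssup M (\<lambda>x. - f x)"

definition p_plus :: "'a::euclidean_space set \<Rightarrow> ('a \<Rightarrow> real) \<Rightarrow> ereal" where
  "p_plus \<Omega> p = esssup (lebesgue_on \<Omega>) (\<lambda>x. ereal (p x))"

definition p_minus :: "'a::euclidean_space set \<Rightarrow> ('a \<Rightarrow> real) \<Rightarrow> ereal" where
  "p_minus \<Omega> p = essinf (lebesgue_on \<Omega>) (\<lambda>x. ereal (p x))"

definition modular :: "'a::euclidean_space set \<Rightarrow> ('a \<Rightarrow> real) \<Rightarrow> ('a \<Rightarrow> real) \<Rightarrow> ennreal" where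
  "modular \<Omega> p f = (\<integral>\<^sup>+ x. ennreal (\<bar>f x\<bar> powr p x) \<partial>lebesgue_on \<Omega>)"

definition in_Lvar :: "'a::euclidean_space set \<Rightarrow> ('a \<Rightarrow> real) \<Rightarrow> ('a \<Rightarrow> real) \<Rightarrow> bool" where
  "in_Lvar \<Omega> p f \<longleftrightarrow> f \<in> borel_measurable (lebesgue_on \<Omega>) \<and> modular \<Omega> p f < \<infinity>"

definition lux_norm :: "'a::euclidean_space set \<Rightarrow> ('a \<Rightarrow> real) \<Rightarrow> ('a \<Rightarrow> real) \<Rightarrow> real" where
  "lux_norm \<Omega> p f = Inf {t::real. t > 0 \<and> modular \<Omega> p (\<lambda>x. f x / t) \<le> 1}"

definition in_Lq :: "'a::euclidean_space set \<Rightarrow> real \<Rightarrow> ('a \<Rightarrow> real) \<Rightarrow> bool" where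
  "in_Lq \<Omega> q f \<longleftrightarrow> in_Lvar \<Omega> (\<lambda>_. q) f"

definition Lq_norm :: "'a::euclidean_space set \<Rightarrow> real \<Rightarrow> ('a \<Rightarrow> real) \<Rightarrow> real" where
  "Lq_norm \<Omega> q f = (enn2real (modular \<Omega> (\<lambda>_. q) f)) powr (1 / q)"

end

theory Submission
  imports Defs
begin

(*
  Write |\<Omega>| for the measure of \<Omega> and let \<theta> = p\<^sup>+ if |\<Omega>| \<ge> 1, \<theta> = p\<^sup>- otherwise.
  Young's inequality with exponents p(x)/q, scaled by |\<Omega>|^(q/\<theta>), gives pointwise
    |v|^q \<le> (q/p\<^sup>-) |\<Omega>|^(1-q/\<theta>) |v|^p(x) + (1 - q/p\<^sup>+) |\<Omega>|^(-q/\<theta>).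
  If t is admissible in the Luxemburg norm of u, integrating this for v = u/t yields
  \<integral>|u/t|^q \<le> |\<Omega>|^(1-q/\<theta>) (1 + q/p\<^sup>- - q/p\<^sup>+), and p\<^sup>+ \<le> \<beta> p\<^sup>- bounds the right-hand
  side by C^q, with C the constant of the theorem. Hence \<parallel>u\<parallel>_q \<le> C t, and taking the
  infimum over t gives the estimate.
*)

lemma Youngs_inequality_scaled:
  fixes w r c :: real
  assumes "0 \<le> w" "1 \<le> r" "0 < c"
  shows "w \<le> c powr (r - 1) * w powr r / r + (1 - 1 / r) / c"
proof (cases "w = 0")
  case True
  then show ?thesis using assms by simp
next
  case False
  have "((c * w) powr r) powr (1 / r) * 1 powr (1 - 1 / r) \<le> 1 / r * (c * w) powr r + (1 - 1 / r) * 1"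
    by (rule Youngs_inequality_0) (use assms False in auto)
  then have "c * w \<le> (c * w) powr r / r + (1 - 1 / r)"
    using assms by (simp add: powr_powr)
  also have "(c * w) powr r = c * (c powr (r - 1) * w powr r)"
    using assms by (simp add: powr_mult powr_diff)
  finally show ?thesis
    using assms by (simp add: field_simps)
qed

lemma abs_powr_le_affine_powr:
  fixes m q Pm Pp s v :: real
  assumes "0 < m" "1 \<le> q" "q \<le> Pm" "Pm \<le> s" "s \<le> Pp"
  defines "\<theta> \<equiv> if 1 \<le> m then Pp else Pm"
  shows "\<bar>v\<bar> powr q \<le> q / Pm * m powr (1 - q / \<theta>) * \<bar>v\<bar> powr s + (1 - q / Pp) * m powr (- q / \<theta>)"
proof -
  have \<theta>: "Pm \<le> \<theta>" "\<theta> \<le> Pp" "0 < \<theta>"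
    using assms by (auto simp: \<theta>_def)
  define c where "c = m powr (q / \<theta>)"
  have "\<bar>v\<bar> powr q \<le> c powr (s / q - 1) * (\<bar>v\<bar> powr q) powr (s / q) / (s / q) + (1 - 1 / (s / q)) / c"
    by (rule Youngs_inequality_scaled) (use assms in \<open>auto simp: c_def\<close>)
  also have "\<dots> = m powr ((s - q) / \<theta>) * (q / s) * \<bar>v\<bar> powr s + (1 - q / s) * m powr (- q / \<theta>)"
    using assms \<theta> by (simp add: c_def powr_powr powr_minus divide_simps)
  also have "\<dots> \<le> m powr (1 - q / \<theta>) * (q / Pm) * \<bar>v\<bar> powr s + (1 - q / Pp) * m powr (- q / \<theta>)"
  proof (intro add_mono mult_right_mono mult_mono)
    \<comment> \<open>The choice of \<open>\<theta>\<close> makes this hold both for \<open>m \<ge> 1\<close> and for \<open>m < 1\<close>.\<close>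
    show "m powr ((s - q) / \<theta>) \<le> m powr (1 - q / \<theta>)"
    proof (cases "1 \<le> m")
      case True
      then have "(s - q) / \<theta> \<le> 1 - q / \<theta>"
        using assms \<theta> by (simp add: \<theta>_def field_simps)
      then show ?thesis using True by (intro powr_mono) auto
    next
      case False
      then have "1 - q / \<theta> \<le> (s - q) / \<theta>"
        using assms \<theta> by (simp add: \<theta>_def field_simps)
      then show ?thesis using False assms by (intro powr_mono') auto
    qed
    show "q / s \<le> q / Pm" "1 - q / s \<le> 1 - q / Pp"
      using assms by (auto intro!: divide_left_mono)
  qed (use assms in auto)
  finally show ?thesis by (simp add: mult_ac)
qed

definition embedding_const :: "real \<Rightarrow> real \<Rightarrow> real \<Rightarrow> real \<Rightarrow> real \<Rightarrow> real" where
  "embedding_const m q Pm Pp \<beta> =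
     max (m powr (1 / q - 1 / Pm)) (m powr (\<beta> * (1 / q - 1 / Pp))) * (1 + q / Pp * (\<beta> - 1)) powr (1 / q)"

lemma max_powr_distrib:
  fixes a b q :: real
  assumes "0 \<le> a" "0 \<le> b" "0 \<le> q"
  shows "max a b powr q = max (a powr q) (b powr q)"
  using assms powr_mono2[of q a b] powr_mono2[of q b a] by (auto simp: max_def)

lemma embedding_const_powr:
  assumes "0 < m" "0 < q" "0 \<le> 1 + q / Pp * (\<beta> - 1)"
  shows "embedding_const m q Pm Pp \<beta> powr q
    = max (m powr (1 - q / Pm)) (m powr (\<beta> * (1 - q / Pp))) * (1 + q / Pp * (\<beta> - 1))"
proof -
  have exponents: "(1 / q - 1 / Pm) * q = 1 - q / Pm" "\<beta> * (1 / q - 1 / Pp) * q = \<beta> * (1 - q / Pp)"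
    using assms by (simp_all add: field_simps)
  have "embedding_const m q Pm Pp \<beta> powr q
    = max (m powr (1 / q - 1 / Pm)) (m powr (\<beta> * (1 / q - 1 / Pp))) powr q
      * ((1 + q / Pp * (\<beta> - 1)) powr (1 / q)) powr q"
    unfolding embedding_const_def by (rule powr_mult)
  also have "\<dots> = max (m powr (1 - q / Pm)) (m powr (\<beta> * (1 - q / Pp))) * (1 + q / Pp * (\<beta> - 1))"
    using assms by (simp add: max_powr_distrib powr_powr exponents del: times_divide_eq_right)
  finally show ?thesis .
qed

lemma embedding_const_pos:
  assumes "0 < m" "0 < q" "0 < Pp" "1 \<le> \<beta>"
  shows "0 < embedding_const m q Pm Pp \<beta>"
proof -
  have "0 < 1 + q / Pp * (\<beta> - 1)"
    using assms by (simp add: add_pos_nonneg)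
  then show ?thesis
    using assms by (simp add: embedding_const_def less_max_iff_disj)
qed

lemma powr_le_embedding_const_powr:
  assumes "0 < m" "1 \<le> q" "q \<le> Pm" "Pm \<le> Pp" "Pp \<le> \<beta> * Pm" "1 \<le> \<beta>"
  defines "\<theta> \<equiv> if 1 \<le> m then Pp else Pm"
  shows "m powr (1 - q / \<theta>) * (q / Pm + 1 - q / Pp) \<le> embedding_const m q Pm Pp \<beta> powr q"
proof -
  have q_Pp: "q / Pp \<le> 1"
    using assms by simp
  have base_le: "m powr (1 - q / \<theta>) \<le> max (m powr (1 - q / Pm)) (m powr (\<beta> * (1 - q / Pp)))"
  proof (cases "1 \<le> m")
    case True
    have "1 - q / Pp \<le> \<beta> * (1 - q / Pp)"
      using q_Pp \<open>1 \<le> \<beta>\<close> by (simp add: mult_le_cancel_right1)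
    then show ?thesis using True by (simp add: \<theta>_def le_max_iff_disj powr_mono)
  qed (simp add: \<theta>_def)
  have factor_le: "q / Pm + 1 - q / Pp \<le> 1 + q / Pp * (\<beta> - 1)"
  proof -
    have "q / Pm \<le> q * \<beta> / Pp"
      using assms by (simp add: field_simps mult_left_mono)
    then show ?thesis by (simp add: algebra_simps diff_divide_distrib)
  qed
  have "0 \<le> q / Pm + 1 - q / Pp"
    using q_Pp assms by (simp add: add_increasing)
  with base_le factor_le
  have "m powr (1 - q / \<theta>) * (q / Pm + 1 - q / Pp)
    \<le> max (m powr (1 - q / Pm)) (m powr (\<beta> * (1 - q / Pp))) * (1 + q / Pp * (\<beta> - 1))"
    by (intro mult_mono) (auto simp: le_max_iff_disj)
  also have "\<dots> = embedding_const m q Pm Pp \<beta> powr q"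
    using assms q_Pp by (simp add: embedding_const_powr)
  finally show ?thesis .
qed

lemma nn_integral_abs_powr_le_of_modular_le_1:
  fixes M :: "'a measure" and p v :: "'a \<Rightarrow> real"
  assumes "emeasure M (space M) = ennreal m" "0 < m"
    and "(\<lambda>x. ennreal (\<bar>v x\<bar> powr p x)) \<in> borel_measurable M"
    and "AE x in M. Pm \<le> p x \<and> p x \<le> Pp"
    and "1 \<le> q" "q \<le> Pm" "Pm \<le> Pp"
    and "(\<integral>\<^sup>+ x. ennreal (\<bar>v x\<bar> powr p x) \<partial>M) \<le> 1"
  defines "\<theta> \<equiv> if 1 \<le> m then Pp else Pm"
  shows "(\<integral>\<^sup>+ x. ennreal (\<bar>v x\<bar> powr q) \<partial>M) \<le> ennreal (m powr (1 - q / \<theta>) * (q / Pm + 1 - q / Pp))"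
proof -
  define a where "a = q / Pm * m powr (1 - q / \<theta>)"
  define b where "b = (1 - q / Pp) * m powr (- q / \<theta>)"
  have ab: "0 \<le> a" "0 \<le> b"
    using assms by (simp_all add: a_def b_def)
  have "(\<integral>\<^sup>+ x. ennreal (\<bar>v x\<bar> powr q) \<partial>M) \<le> (\<integral>\<^sup>+ x. ennreal a * ennreal (\<bar>v x\<bar> powr p x) + ennreal b \<partial>M)"
    using assms(4)
  proof (intro nn_integral_mono_AE, eventually_elim)
    case (elim x)
    then have "\<bar>v x\<bar> powr q \<le> a * \<bar>v x\<bar> powr p x + b"
      unfolding a_def b_def \<theta>_def using assms by (intro abs_powr_le_affine_powr) auto
    moreover have "ennreal a * ennreal (\<bar>v x\<bar> powr p x) + ennreal b = ennreal (a * \<bar>v x\<bar> powr p x + b)"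
      using ab by (simp add: ennreal_mult ennreal_plus)
    ultimately show ?case
      by (simp add: ennreal_leI)
  qed
  also have "\<dots> = ennreal a * (\<integral>\<^sup>+ x. ennreal (\<bar>v x\<bar> powr p x) \<partial>M) + ennreal b * ennreal m"
    using assms by (simp add: nn_integral_add nn_integral_cmult)
  also have "\<dots> \<le> ennreal a * 1 + ennreal b * ennreal m"
    using assms by (intro add_mono mult_left_mono) auto
  also have "\<dots> = ennreal (a + b * m)"
    using ab assms by (simp add: ennreal_mult ennreal_plus)
  also have "a + b * m = m powr (1 - q / \<theta>) * (q / Pm + 1 - q / Pp)"
    using powr_mult_base[of m "- q / \<theta>"] \<open>0 < m\<close> by (simp add: a_def b_def algebra_simps)
  finally show ?thesis .
qed

lemma essinf_AE: "AE x in M. essinf M f \<le> f x"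
  using esssup_AE[of "\<lambda>x. - f x" M]
  by eventually_elim (simp add: essinf_def ereal_uminus_le_reorder)

lemma essinf_I:
  assumes "f \<in> borel_measurable M" "AE x in M. c \<le> f x"
  shows "c \<le> essinf M f"
proof -
  have "esssup M (\<lambda>x. - f x) \<le> - c"
    using assms(2) by (intro esssup_I) (use assms(1) in \<open>auto elim: eventually_mono\<close>)
  then show ?thesis
    unfolding essinf_def by (metis ereal_minus_le_minus ereal_uminus_uminus)
qed

lemma essinf_le_esssup:
  assumes "emeasure M (space M) \<noteq> 0"
  shows "essinf M f \<le> esssup M f"
proof -
  have "ae_filter M \<noteq> bot"
    using assms by (simp add: ae_filter_eq_bot_iff)
  moreover have "AE x in M. essinf M f \<le> f x \<and> f x \<le> esssup M f"
    using essinf_AE esssup_AE by (rule AE_conjI)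
  ultimately show ?thesis
    using eventually_happens' order_trans by blast
qed

lemma nn_integral_zero_space:
  "emeasure M (space M) = 0 \<Longrightarrow> integral\<^sup>N M f = 0"
  using nn_integral_cong_AE[OF emeasure_0_AE, of M f "\<lambda>_. 0"] by simp

lemma emeasure_lebesgue_on_space:
  "\<Omega> \<in> sets lebesgue \<Longrightarrow> emeasure (lebesgue_on \<Omega>) (space (lebesgue_on \<Omega>)) = emeasure lebesgue \<Omega>"
  by (simp add: emeasure_restrict_space)

lemma p_minus_p_plus_realE:
  fixes \<Omega> :: "'a::euclidean_space set" and p :: "'a \<Rightarrow> real"
  assumes "\<Omega> \<in> sets lebesgue" "emeasure lebesgue \<Omega> \<noteq> 0"
    and "p \<in> borel_measurable (lebesgue_on \<Omega>)" "\<forall>x\<in>\<Omega>. 1 \<le> p x" "p_plus \<Omega> p < \<infinity>"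
  obtains Pm Pp where "p_minus \<Omega> p = ereal Pm" "p_plus \<Omega> p = ereal Pp" "1 \<le> Pm" "Pm \<le> Pp"
    "AE x in lebesgue_on \<Omega>. Pm \<le> p x \<and> p x \<le> Pp"
proof -
  have "1 \<le> p_minus \<Omega> p"
    unfolding p_minus_def using assms(3,4) by (intro essinf_I) auto
  moreover have "p_minus \<Omega> p \<le> p_plus \<Omega> p"
    unfolding p_minus_def p_plus_def
    using emeasure_lebesgue_on_space[OF assms(1)] assms(2) by (intro essinf_le_esssup) argo
  moreover have "AE x in lebesgue_on \<Omega>. p_minus \<Omega> p \<le> p x \<and> p x \<le> p_plus \<Omega> p"
    unfolding p_minus_def p_plus_def using essinf_AE esssup_AE by (rule AE_conjI)
  ultimately show ?thesis
    using that[of "real_of_ereal (p_minus \<Omega> p)" "real_of_ereal (p_plus \<Omega> p)"] assms(5)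
    by (cases "p_minus \<Omega> p"; cases "p_plus \<Omega> p") auto
qed

lemma modular_const_exponent_divide:
  assumes "u \<in> borel_measurable (lebesgue_on \<Omega>)" "0 < t"
  shows "modular \<Omega> (\<lambda>_. q) u = ennreal (t powr q) * modular \<Omega> (\<lambda>_. q) (\<lambda>x. u x / t)"
proof -
  have "ennreal (\<bar>u x\<bar> powr q) = ennreal (t powr q) * ennreal (\<bar>u x / t\<bar> powr q)" for x
    using assms(2) by (simp add: powr_divide flip: ennreal_mult)
  then show ?thesis
    unfolding modular_def using assms(1) by (simp add: nn_integral_cmult)
qed

lemma modular_divide_le_1E:
  assumes "in_Lvar \<Omega> p u" "p \<in> borel_measurable (lebesgue_on \<Omega>)" "AE x in lebesgue_on \<Omega>. 1 \<le> p x"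
  obtains t where "0 < t" "modular \<Omega> p (\<lambda>x. u x / t) \<le> 1"
proof -
  have [measurable]: "u \<in> borel_measurable (lebesgue_on \<Omega>)" "p \<in> borel_measurable (lebesgue_on \<Omega>)"
    using assms by (simp_all add: in_Lvar_def)
  obtain \<mu> where \<mu>: "modular \<Omega> p u = ennreal \<mu>" "0 \<le> \<mu>"
    using assms(1) by (cases "modular \<Omega> p u") (auto simp: in_Lvar_def)
  define t where "t = 1 + \<mu>"
  have t: "1 \<le> t"
    using \<mu> by (simp add: t_def)
  have "modular \<Omega> p (\<lambda>x. u x / t) \<le> (\<integral>\<^sup>+ x. ennreal (1 / t) * ennreal (\<bar>u x\<bar> powr p x) \<partial>lebesgue_on \<Omega>)"
    unfolding modular_def using assms(3)
  proof (intro nn_integral_mono_AE, eventually_elim)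
    case (elim x)
    have "t \<le> t powr p x"
      using powr_mono[of 1 "p x" t] elim t by simp
    then have "\<bar>u x / t\<bar> powr p x \<le> \<bar>u x\<bar> powr p x / t"
      using t by (simp add: powr_divide divide_left_mono)
    then show ?case
      using t by (simp add: ennreal_leI flip: ennreal_mult)
  qed
  also have "\<dots> = ennreal (1 / t) * modular \<Omega> p u"
    unfolding modular_def by (rule nn_integral_cmult) measurable
  also have "\<dots> = ennreal (\<mu> / t)"
    using \<mu> t by (simp flip: ennreal_mult)
  also have "\<dots> \<le> 1"
    using \<mu> by (simp add: t_def)
  finally have "modular \<Omega> p (\<lambda>x. u x / t) \<le> 1" .
  with t show ?thesis
    by (intro that[of t]) auto
qed

lemma Lq_norm_le_lux_norm_of_modular_bound:
  assumes "0 < t\<^sub>0" "modular \<Omega> p (\<lambda>x. u x / t\<^sub>0) \<le> 1" "0 < C" "0 < q"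
    and bound: "\<And>t. 0 < t \<Longrightarrow> modular \<Omega> p (\<lambda>x. u x / t) \<le> 1
      \<Longrightarrow> modular \<Omega> (\<lambda>_. q) u \<le> ennreal ((C * t) powr q)"
  shows "modular \<Omega> (\<lambda>_. q) u < \<infinity>" "Lq_norm \<Omega> q u \<le> C * lux_norm \<Omega> p u"
proof -
  show "modular \<Omega> (\<lambda>_. q) u < \<infinity>"
    using bound[OF assms(1,2)] by (simp add: le_less_trans)
  define S where "S = {t. 0 < t \<and> modular \<Omega> p (\<lambda>x. u x / t) \<le> 1}"
  have "Lq_norm \<Omega> q u / C \<le> t" if "t \<in> S" for t
  proof -
    have t: "0 < t" "modular \<Omega> p (\<lambda>x. u x / t) \<le> 1"
      using that by (auto simp: S_def)
    have "enn2real (modular \<Omega> (\<lambda>_. q) u) \<le> (C * t) powr q"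
      using bound[OF t] by (intro enn2real_leI) auto
    then have "Lq_norm \<Omega> q u \<le> ((C * t) powr q) powr (1 / q)"
      unfolding Lq_norm_def using assms(4) by (intro powr_mono2) auto
    also have "\<dots> = C * t"
      using assms t by (simp add: powr_powr)
    finally show ?thesis
      using assms(3) by (simp add: divide_le_eq mult.commute)
  qed
  then have "Lq_norm \<Omega> q u / C \<le> Inf S"
    using assms(1,2) by (intro cInf_greatest) (auto simp: S_def)
  then show "Lq_norm \<Omega> q u \<le> C * lux_norm \<Omega> p u"
    using assms(3) by (simp add: lux_norm_def S_def divide_le_eq mult.commute)
qed

lemma Lq_norm_le_embedding_const_lux_norm:
  fixes \<Omega> :: "'a::euclidean_space set" and p u :: "'a \<Rightarrow> real"
  assumes "\<Omega> \<in> sets lebesgue" "emeasure lebesgue \<Omega> = ennreal m" "0 < m"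
    and "p \<in> borel_measurable (lebesgue_on \<Omega>)" "AE x in lebesgue_on \<Omega>. Pm \<le> p x \<and> p x \<le> Pp"
    and "1 \<le> q" "q \<le> Pm" "Pm \<le> Pp" "Pp \<le> \<beta> * Pm" "1 \<le> \<beta>"
    and "in_Lvar \<Omega> p u"
  shows "in_Lq \<Omega> q u \<and> Lq_norm \<Omega> q u \<le> embedding_const m q Pm Pp \<beta> * lux_norm \<Omega> p u"
proof -
  define C where "C = embedding_const m q Pm Pp \<beta>"
  have [measurable]: "u \<in> borel_measurable (lebesgue_on \<Omega>)" "p \<in> borel_measurable (lebesgue_on \<Omega>)"
    using assms by (simp_all add: in_Lvar_def)
  have space: "emeasure (lebesgue_on \<Omega>) (space (lebesgue_on \<Omega>)) = ennreal m"
    unfolding emeasure_lebesgue_on_space[OF assms(1)] by (rule assms(2))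
  have C: "0 < C"
    unfolding C_def using assms by (intro embedding_const_pos) auto
  have bound: "modular \<Omega> (\<lambda>_. q) u \<le> ennreal ((C * t) powr q)"
    if t: "0 < t" "modular \<Omega> p (\<lambda>x. u x / t) \<le> 1" for t
  proof -
    let ?\<theta> = "if 1 \<le> m then Pp else Pm"
    have "modular \<Omega> (\<lambda>_. q) (\<lambda>x. u x / t) \<le> ennreal (m powr (1 - q / ?\<theta>) * (q / Pm + 1 - q / Pp))"
      unfolding modular_def
    proof (rule nn_integral_abs_powr_le_of_modular_le_1)
      show "(\<integral>\<^sup>+ x. ennreal (\<bar>u x / t\<bar> powr p x) \<partial>lebesgue_on \<Omega>) \<le> 1"
        using t(2) by (simp add: modular_def)
    qed (use assms space in auto)
    also have "\<dots> \<le> ennreal (C powr q)"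
      unfolding C_def using assms by (intro ennreal_leI powr_le_embedding_const_powr)
    finally have "modular \<Omega> (\<lambda>_. q) (\<lambda>x. u x / t) \<le> ennreal (C powr q)" .
    then have "ennreal (t powr q) * modular \<Omega> (\<lambda>_. q) (\<lambda>x. u x / t) \<le> ennreal (t powr q) * ennreal (C powr q)"
      by (rule mult_left_mono) simp
    then show ?thesis
      using t C by (simp add: modular_const_exponent_divide[of u \<Omega> t] powr_mult mult.commute flip: ennreal_mult)
  qed
  have "AE x in lebesgue_on \<Omega>. 1 \<le> p x"
    using assms(5) by eventually_elim (use assms(6,7) in auto)
  then obtain t\<^sub>0 where "0 < t\<^sub>0" "modular \<Omega> p (\<lambda>x. u x / t\<^sub>0) \<le> 1"
    using modular_divide_le_1E[OF assms(11,4)] by blast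
  from Lq_norm_le_lux_norm_of_modular_bound[OF this C _ bound]
  show ?thesis
    using assms by (simp add: in_Lq_def in_Lvar_def C_def)
qed

lemma Lvar_embedding_Lq:
  fixes \<Omega> :: "'a::euclidean_space set" and p u :: "'a \<Rightarrow> real"
  assumes \<Omega>: "\<Omega> \<in> sets lebesgue" and m: "emeasure lebesgue \<Omega> = ennreal m" "0 \<le> m"
    and "p \<in> borel_measurable (lebesgue_on \<Omega>)" "\<forall>x\<in>\<Omega>. 1 \<le> p x" "p_plus \<Omega> p < \<infinity>"
    and "1 \<le> \<beta>" "p_plus \<Omega> p \<le> ereal \<beta> * p_minus \<Omega> p"
    and q: "1 \<le> q" "ereal q \<le> p_minus \<Omega> p" and u: "in_Lvar \<Omega> p u"
  shows "in_Lq \<Omega> q u \<and> Lq_norm \<Omega> q u \<le> embedding_const m q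
    (real_of_ereal (p_minus \<Omega> p)) (real_of_ereal (p_plus \<Omega> p)) \<beta> * lux_norm \<Omega> p u"
proof (cases "m = 0")
  case True
  \<comment> \<open>Both sides vanish, the right one because \<open>0 powr _ = 0\<close>.\<close>
  then have "modular \<Omega> (\<lambda>_. q) u = 0"
    unfolding modular_def using emeasure_lebesgue_on_space[OF \<Omega>] m(1)
    by (intro nn_integral_zero_space) simp
  with True u q show ?thesis
    by (simp add: in_Lq_def in_Lvar_def Lq_norm_def embedding_const_def)
next
  case False
  then have "0 < m" "emeasure lebesgue \<Omega> \<noteq> 0"
    using m by simp_all
  then obtain Pm Pp where "p_minus \<Omega> p = ereal Pm" "p_plus \<Omega> p = ereal Pp" "1 \<le> Pm" "Pm \<le> Pp"
    "AE x in lebesgue_on \<Omega>. Pm \<le> p x \<and> p x \<le> Pp"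
    using p_minus_p_plus_realE[OF \<Omega> _ assms(4-6)] by blast
  with Lq_norm_le_embedding_const_lux_norm[OF \<Omega> m(1) \<open>0 < m\<close> assms(4)] q u assms(7,8)
  show ?thesis by simp
qed

theorem lemma3p2:
  fixes \<Omega> :: "'a::euclidean_space set" and p :: "'a \<Rightarrow> real" and \<beta> :: real
  assumes "open \<Omega>"
    and "emeasure lebesgue \<Omega> < \<infinity>"
    and "p \<in> borel_measurable (lebesgue_on \<Omega>)"
    and "\<forall>x\<in>\<Omega>. 1 \<le> p x"
    and "p_plus \<Omega> p < \<infinity>"
    and "\<beta> > 1"
    and "p_plus \<Omega> p \<le> ereal \<beta> * p_minus \<Omega> p"
  shows "(\<forall>q (u :: 'a \<Rightarrow> real). 1 \<le> q \<and> ereal q \<le> p_minus \<Omega> p \<and> in_Lvar \<Omega> p u \<longrightarrow>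
            in_Lq \<Omega> q u \<and>
            Lq_norm \<Omega> q u \<le>
              max (measure lebesgue \<Omega> powr (1 / q - 1 / real_of_ereal (p_minus \<Omega> p)))
                  (measure lebesgue \<Omega> powr (\<beta> * (1 / q - 1 / real_of_ereal (p_plus \<Omega> p))))
              * (1 + q / real_of_ereal (p_plus \<Omega> p) * (\<beta> - 1)) powr (1 / q)
              * lux_norm \<Omega> p u)
       \<and> (\<forall>q (u :: 'a \<Rightarrow> 'b::euclidean_space).
            1 \<le> q \<and> ereal q \<le> p_minus \<Omega> p \<and>
            u \<in> borel_measurable (lebesgue_on \<Omega>) \<and> in_Lvar \<Omega> p (\<lambda>x. norm (u x)) \<longrightarrow>
            in_Lq \<Omega> q (\<lambda>x. norm (u x)))"
proof -
  have \<Omega>: "\<Omega> \<in> sets lebesgue"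
    using assms(1) by simp
  have m: "emeasure lebesgue \<Omega> = ennreal (measure lebesgue \<Omega>)"
    using assms(2) by (intro emeasure_eq_ennreal_measure) simp
  show ?thesis
    using Lvar_embedding_Lq[OF \<Omega> m measure_nonneg assms(3-5) _ assms(7)] \<open>\<beta> > 1\<close>
    by (auto simp: embedding_const_def)
qed

end
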